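(* Let $n\ge2$, $r\ge1$, $q_1,q_2\in\mathbb{C}$ with $q_1q_2\ne0$ and $q=-q_2/q_1$ not a root of unity, and $[n]_q=1+q+\cdots+q^{n-1}$. Then the rules $s_i\cdot(v_1\otimes\cdots\otimes v_r)=v_1\otimes\cdots\otimes v_{i+1}\otimes v_i\otimes\cdots\otimes v_r$ (swap of the $i$th and $(i+1)$st factors, $1\le i\le r-1$) and $p_j\cdot(v_1\otimes\cdots\otimes v_r)=v_1\otimes\cdots\otimes Pv_j\otimes\cdots\otimes v_r$ ($1\le j\le r$) extend to a well-defined structure of left $\mathcal{P}'_r([n]_q)$-module on $\mathbf{E}^{\otimes r}$.
   Context: $\mathbf{E}=\mathbb{C}^n$ with basis $e_1,\dots,e_n$; $P\in\operatorname{End}(\mathbf{E})$ is given by $Pe_j=q^{j-1}(e_1+\cdots+e_n)$. Partial permutations of $\{1,\dots,r\}$ are bijections $d:X\to Y$ between subsets $X=\mathrm{dom}(d)$, $Y=\mathrm{im}(d)$, written on the right and composed by $x(d_1\circ d_2)=(xd_1)d_2$. For $z\ne0$, $\mathcal{P}'_r(z)$ is the algebra with basis the partial permutations and product $d_1d_2=z^N(d_1\circ d_2)$, $N=r-|\mathrm{im}(d_1)\cup\mathrm{dom}(d_2)|$ (the subalgebra of the partition algebra spanned by partial-permutation diagrams). It is generated by $s_i$ (the permutation swapping $i,i+1$) and $p_j$ (the identity map of $\{1,\dots,r\}\setminus\{j\}$). *)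

theory Defs
  imports Complex_Main
begin

text \<open>Basis of E^{tensor r}: words w of length r with letters in {0..<n};
  e_w = e_{w!0+1} (x) ... (x) e_{w!(r-1)+1}.  Operators on E^{tensor r} are
  represented by matrices indexed by such words.  Positions and letters are 0-based.\<close>

definition words :: "nat \<Rightarrow> nat \<Rightarrow> nat list set" where
  "words n r = {w. length w = r \<and> set w \<subseteq> {0..<n}}"

type_synonym tmat = "nat list \<Rightarrow> nat list \<Rightarrow> complex"

definition tmul :: "nat \<Rightarrow> nat \<Rightarrow> tmat \<Rightarrow> tmat \<Rightarrow> tmat" where
  "tmul n r A B = (\<lambda>w u. \<Sum>v\<in>words n r. A w v * B v u)"

definition tid :: tmat where
  "tid = (\<lambda>w u. if w = u then 1 else 0)"

definition tscale :: "complex \<Rightarrow> tmat \<Rightarrow> tmat" where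
  "tscale c A = (\<lambda>w u. c * A w u)"

definition swap_op :: "nat \<Rightarrow> tmat" where
  "swap_op i = (\<lambda>w u. if w = u[i := u ! Suc i, Suc i := u ! i] then 1 else 0)"

text \<open>P e_b = q^b (e_0 + ... + e_{n-1}) (0-based letters), applied at factor j.\<close>
definition P_op :: "complex \<Rightarrow> nat \<Rightarrow> tmat" where
  "P_op q j = (\<lambda>w u. if length w = length u \<and> (\<forall>k<length u. k \<noteq> j \<longrightarrow> w ! k = u ! k)
                     then q ^ (u ! j) else 0)"

definition partial_perm :: "nat \<Rightarrow> (nat \<Rightarrow> nat option) \<Rightarrow> bool" where
  "partial_perm r d \<longleftrightarrow> dom d \<subseteq> {0..<r} \<and> ran d \<subseteq> {0..<r} \<and> inj_on d (dom d)"

text \<open>Right-action composition: x (d1 \<circ> d2) = (x d1) d2.\<close>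
definition pp_comp :: "(nat \<Rightarrow> nat option) \<Rightarrow> (nat \<Rightarrow> nat option) \<Rightarrow> (nat \<Rightarrow> nat option)" where
  "pp_comp d1 d2 = d2 \<circ>\<^sub>m d1"

text \<open>Exponent N = r - |im d1 \<union> dom d2| in the product d1 d2 = z^N (d1 \<circ> d2).\<close>
definition pp_N :: "nat \<Rightarrow> (nat \<Rightarrow> nat option) \<Rightarrow> (nat \<Rightarrow> nat option) \<Rightarrow> nat" where
  "pp_N r d1 d2 = r - card (ran d1 \<union> dom d2)"

definition pp_id :: "nat \<Rightarrow> nat \<Rightarrow> nat option" where
  "pp_id r = (\<lambda>k. if k < r then Some k else None)"

definition pp_s :: "nat \<Rightarrow> nat \<Rightarrow> nat \<Rightarrow> nat option" where
  "pp_s r i = (\<lambda>k. if k < r then Some (if k = i then Suc i else if k = Suc i then i else k) else None)"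

definition pp_p :: "nat \<Rightarrow> nat \<Rightarrow> nat \<Rightarrow> nat option" where
  "pp_p r j = (\<lambda>k. if k < r \<and> k \<noteq> j then Some k else None)"

definition qint :: "nat \<Rightarrow> complex \<Rightarrow> complex" where
  "qint n q = (\<Sum>k<n. q ^ k)"

end

theory Submission
  imports Defs
begin

text \<open>P is the rank-one operator x \<phi> with x = e_1 + ... + e_n and \<phi>(e_j) = q^(j-1), so that
  \<phi>(x) = [n]_q.  A partial permutation d acts on E^{\<otimes> r} by moving tensor factors along d,
  inserting x at the positions outside dom d and applying \<phi> at the positions outside im d.
  In a product d1 d2, every middle position that is neither hit by d1 nor used by d2 closes
  a loop \<phi>(x) = [n]_q, and there are exactly N = r - |im d1 \<union> dom d2| of them.
  In coordinates, the matrix product is a sum over middle words that factorises over the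
  middle positions, and each factor is a sum over a single letter.\<close>

lemma words_Suc: "words n (Suc r) = (\<lambda>(v, a). v @ [a]) ` (words n r \<times> {..<n})"
proof
  show "words n (Suc r) \<subseteq> (\<lambda>(v, a). v @ [a]) ` (words n r \<times> {..<n})"
  proof
    fix x assume "x \<in> words n (Suc r)"
    then obtain v a where "x = v @ [a]" "length v = r" "set x \<subseteq> {0..<n}"
      by (auto simp: words_def length_Suc_conv_rev)
    then show "x \<in> (\<lambda>(v, a). v @ [a]) ` (words n r \<times> {..<n})"
      by (auto simp: words_def image_iff)
  qed
qed (auto simp: words_def)

lemma sum_words_prod_eq_prod_sum:
  fixes g :: "nat \<Rightarrow> nat \<Rightarrow> 'a::comm_semiring_1"
  shows "(\<Sum>v\<in>words n r. \<Prod>m<r. g m (v ! m)) = (\<Prod>m<r. \<Sum>a<n. g m a)"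
proof (induction r)
  case 0
  have "words n 0 = {[]}" by (auto simp: words_def)
  then show ?case by simp
next
  case (Suc r)
  have inj: "inj_on (\<lambda>(v, a). v @ [a]) (words n r \<times> {..<n})"
    by (auto simp: inj_on_def)
  have snoc: "(\<Prod>m<Suc r. g m ((v @ [a]) ! m)) = (\<Prod>m<r. g m (v ! m)) * g r a"
    if "v \<in> words n r" for v a
    using that by (auto simp: words_def nth_append intro!: prod.cong)
  have "(\<Sum>v\<in>words n (Suc r). \<Prod>m<Suc r. g m (v ! m))
      = (\<Sum>(v, a)\<in>words n r \<times> {..<n}. (\<Prod>m<r. g m (v ! m)) * g r a)"
    unfolding words_Suc sum.reindex[OF inj]
    by (intro sum.cong) (auto simp: snoc simp del: prod.lessThan_Suc)
  also have "\<dots> = (\<Sum>v\<in>words n r. \<Prod>m<r. g m (v ! m)) * (\<Sum>a<n. g r a)"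
    by (simp add: sum_product sum.cartesian_product)
  finally show ?case using Suc by simp
qed

lemma words_nth_less: "w \<in> words n r \<Longrightarrow> k < r \<Longrightarrow> w ! k < n"
  unfolding words_def using nth_mem by fastforce

lemma partial_perm_SomeD:
  assumes "partial_perm r d" and "d k = Some m"
  shows "k < r" and "m < r"
  using assms by (auto simp: partial_perm_def dom_def ran_def)

lemma partial_perm_Some_inj:
  "partial_perm r d \<Longrightarrow> d k = Some m \<Longrightarrow> d k' = Some m \<Longrightarrow> k' = k"
  unfolding partial_perm_def by (metis domI inj_onD)

lemma ran_eq_image_dom: "ran d = (\<lambda>k. the (d k)) ` dom d"
  by (auto simp: ran_def dom_def intro: rev_image_eqI)

lemma ran_pp_comp: "ran (pp_comp d1 d2) = (\<lambda>m. the (d2 m)) ` (dom d2 \<inter> ran d1)"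
  by (auto simp: pp_comp_def ran_def dom_def map_comp_Some_iff intro: rev_image_eqI) blast

lemma inj_on_the_partial_perm:
  assumes "partial_perm r d"
  shows "inj_on (\<lambda>k. the (d k)) (dom d)"
proof (rule inj_onI)
  fix k k' assume "k \<in> dom d" "k' \<in> dom d" "the (d k) = the (d k')"
  then have "d k = d k'" by auto
  with \<open>k \<in> dom d\<close> \<open>k' \<in> dom d\<close> show "k = k'"
    using assms by (auto simp: partial_perm_def dest: inj_onD)
qed

lemma lessThan_diff_ran_pp_comp:
  assumes d1: "partial_perm r d1" and d2: "partial_perm r d2"
  shows "{..<r} - ran (pp_comp d1 d2) = ({..<r} - ran d2) \<union> (\<lambda>m. the (d2 m)) ` (dom d2 - ran d1)"
proof -
  have "(\<lambda>m. the (d2 m)) ` (dom d2 - ran d1)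
      = (\<lambda>m. the (d2 m)) ` dom d2 - (\<lambda>m. the (d2 m)) ` (dom d2 \<inter> ran d1)"
    using inj_on_image_set_diff[OF inj_on_the_partial_perm[OF d2], of "dom d2" "dom d2 \<inter> ran d1"]
    by (simp add: Diff_Int)
  also have "\<dots> = ran d2 - ran (pp_comp d1 d2)"
    by (simp only: ran_pp_comp ran_eq_image_dom[of d2])
  finally have image_eq: "(\<lambda>m. the (d2 m)) ` (dom d2 - ran d1) = ran d2 - ran (pp_comp d1 d2)" .
  have "ran (pp_comp d1 d2) \<subseteq> ran d2"
    unfolding ran_pp_comp ran_eq_image_dom[of d2] by blast
  moreover have "ran d2 \<subseteq> {..<r}"
    using d2 by (auto simp: partial_perm_def)
  ultimately show ?thesis unfolding image_eq by blast
qed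

lemma prod_weights_pp_comp:
  fixes f :: "nat \<Rightarrow> 'a::comm_monoid_mult"
  assumes d1: "partial_perm r d1" and d2: "partial_perm r d2"
  shows "(\<Prod>m\<in>dom d2 - ran d1. f (the (d2 m))) * (\<Prod>j\<in>{..<r} - ran d2. f j)
       = (\<Prod>j\<in>{..<r} - ran (pp_comp d1 d2). f j)"
proof -
  have "finite (dom d2)" using d2 finite_subset by (auto simp: partial_perm_def)
  moreover have "inj_on (\<lambda>m. the (d2 m)) (dom d2 - ran d1)"
    using inj_on_the_partial_perm[OF d2] by (rule inj_on_subset) blast
  moreover have "({..<r} - ran d2) \<inter> (\<lambda>m. the (d2 m)) ` (dom d2 - ran d1) = {}"
    unfolding ran_eq_image_dom[of d2] by blast
  ultimately show ?thesis
    by (simp add: lessThan_diff_ran_pp_comp[OF d1 d2] prod.union_disjoint prod.reindex mult.commute)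
qed

lemma pp_N_eq_card:
  assumes "partial_perm r d1" and "partial_perm r d2"
  shows "pp_N r d1 d2 = card ({..<r} - (ran d1 \<union> dom d2))"
proof -
  have "ran d1 \<union> dom d2 \<subseteq> {..<r}" using assms by (auto simp: partial_perm_def)
  then show ?thesis
    unfolding pp_N_def by (metis card_Diff_subset card_lessThan finite_lessThan finite_subset)
qed

lemma prod_of_bool:
  "finite A \<Longrightarrow> (\<Prod>x\<in>A. of_bool (P x)) = (of_bool (\<forall>x\<in>A. P x) :: 'a::comm_semiring_1)"
  by (induction A rule: finite_induct) auto

text \<open>Entry (w, u) is the coefficient of e_w in d e_u: the letter u!m is copied to every position k
  with d k = Some m, and each position m outside im d contributes the factor q^(u!m).\<close>

definition pp_matrix :: "complex \<Rightarrow> nat \<Rightarrow> (nat \<Rightarrow> nat option) \<Rightarrow> tmat" where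
  "pp_matrix q r d w u =
     of_bool (\<forall>k m. d k = Some m \<longrightarrow> w ! k = u ! m) * (\<Prod>m\<in>{..<r} - ran d. q ^ (u ! m))"

lemma pp_matrix_as_prod_target:
  assumes "ran d \<subseteq> {..<r}"
  shows "pp_matrix q r d w u =
    (\<Prod>m<r. of_bool (\<forall>k. d k = Some m \<longrightarrow> w ! k = u ! m) * (if m \<in> ran d then 1 else q ^ (u ! m)))"
proof -
  have "(\<forall>k m. d k = Some m \<longrightarrow> w ! k = u ! m) \<longleftrightarrow> (\<forall>m<r. \<forall>k. d k = Some m \<longrightarrow> w ! k = u ! m)"
    using assms by (auto simp: ran_def)
  then show ?thesis
    by (simp add: pp_matrix_def prod.distrib prod_of_bool prod.If_cases Diff_eq lessThan_def)
qed

lemma pp_matrix_as_prod_source: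
  assumes "dom d \<subseteq> {..<r}"
  shows "pp_matrix q r d w u =
    (\<Prod>k<r. of_bool (\<forall>m. d k = Some m \<longrightarrow> w ! k = u ! m)) * (\<Prod>m\<in>{..<r} - ran d. q ^ (u ! m))"
proof -
  have "(\<forall>k m. d k = Some m \<longrightarrow> w ! k = u ! m) \<longleftrightarrow> (\<forall>k<r. \<forall>m. d k = Some m \<longrightarrow> w ! k = u ! m)"
    using assms by (auto simp: dom_def)
  then show ?thesis
    by (simp add: pp_matrix_def prod_of_bool lessThan_def)
qed

lemma pp_matrix_letter_sum:
  fixes q :: complex
  assumes d1: "partial_perm r d1" and d2: "partial_perm r d2"
    and w: "w \<in> words n r" and u: "u \<in> words n r"
  shows "(\<Sum>a<n. of_bool (\<forall>k. d1 k = Some m \<longrightarrow> w ! k = a) * (if m \<in> ran d1 then 1 else q ^ a)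
                 * of_bool (\<forall>j. d2 m = Some j \<longrightarrow> a = u ! j))
       = of_bool (\<forall>k j. d1 k = Some m \<longrightarrow> d2 m = Some j \<longrightarrow> w ! k = u ! j)
         * (if m \<in> ran d1 \<union> dom d2 then 1 else qint n q)
         * (if m \<in> dom d2 - ran d1 then q ^ (u ! the (d2 m)) else 1)"
  (is "(\<Sum>a<n. ?L a) = _")
proof (cases "m \<in> ran d1")
  case True
  then obtain k where k: "d1 k = Some m" by (auto simp: ran_def)
  have preimage: "d1 k' = Some m \<longleftrightarrow> k' = k" for k'
    using partial_perm_Some_inj[OF d1 _ k] k by blast
  have "w ! k < n" using words_nth_less[OF w partial_perm_SomeD(1)[OF d1 k]] .
  have "(\<Sum>a<n. ?L a)
      = (\<Sum>a<n. if a = w ! k then of_bool (\<forall>j. d2 m = Some j \<longrightarrow> w ! k = u ! j) else 0)"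
    by (intro sum.cong) (auto simp: preimage True)
  also have "\<dots> = of_bool (\<forall>j. d2 m = Some j \<longrightarrow> w ! k = u ! j)"
    using \<open>w ! k < n\<close> by simp
  finally show ?thesis using True by (simp add: preimage)
next
  case False
  show ?thesis
  proof (cases "d2 m")
    case None
    then show ?thesis using False by (auto simp: qint_def ran_def)
  next
    case (Some j)
    have "u ! j < n" using words_nth_less[OF u partial_perm_SomeD(2)[OF d2 Some]] .
    then show ?thesis using False Some by (auto simp: ran_def)
  qed
qed

lemma pp_matrix_mult:
  fixes q :: complex
  assumes d1: "partial_perm r d1" and d2: "partial_perm r d2"
    and w: "w \<in> words n r" and u: "u \<in> words n r"
  shows "tmul n r (pp_matrix q r d1) (pp_matrix q r d2) w u
       = qint n q ^ pp_N r d1 d2 * pp_matrix q r (pp_comp d1 d2) w u"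
proof -
  define middle_factor where "middle_factor m a =
    of_bool (\<forall>k. d1 k = Some m \<longrightarrow> w ! k = a) * (if m \<in> ran d1 then 1 else q ^ a)
    * of_bool (\<forall>j. d2 m = Some j \<longrightarrow> a = u ! j)" for m a
  define out_weight where "out_weight = (\<Prod>j\<in>{..<r} - ran d2. q ^ (u ! j))"
  have ran1: "ran d1 \<subseteq> {..<r}" and dom2: "dom d2 \<subseteq> {..<r}"
    using d1 d2 by (auto simp: partial_perm_def)
  have "tmul n r (pp_matrix q r d1) (pp_matrix q r d2) w u
      = (\<Sum>v\<in>words n r. \<Prod>m<r. middle_factor m (v ! m)) * out_weight"
    unfolding tmul_def pp_matrix_as_prod_target[OF ran1] pp_matrix_as_prod_source[OF dom2]
    by (simp add: middle_factor_def out_weight_def sum_distrib_right prod.distrib mult.assoc)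
  also have "\<dots> = (\<Prod>m<r. \<Sum>a<n. middle_factor m a) * out_weight"
    by (simp add: sum_words_prod_eq_prod_sum)
  also have "\<dots> = (\<Prod>m<r. of_bool (\<forall>k j. d1 k = Some m \<longrightarrow> d2 m = Some j \<longrightarrow> w ! k = u ! j))
      * (\<Prod>m<r. if m \<in> ran d1 \<union> dom d2 then 1 else qint n q)
      * ((\<Prod>m<r. if m \<in> dom d2 - ran d1 then q ^ (u ! the (d2 m)) else 1) * out_weight)"
    unfolding middle_factor_def pp_matrix_letter_sum[OF d1 d2 w u] by (simp add: prod.distrib mult.assoc)
  also have "(\<Prod>m<r. of_bool (\<forall>k j. d1 k = Some m \<longrightarrow> d2 m = Some j \<longrightarrow> w ! k = u ! j))
      = (of_bool (\<forall>k j. pp_comp d1 d2 k = Some j \<longrightarrow> w ! k = u ! j) :: complex)"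
  proof -
    have "(\<forall>m\<in>{..<r}. \<forall>k j. d1 k = Some m \<longrightarrow> d2 m = Some j \<longrightarrow> w ! k = u ! j)
        \<longleftrightarrow> (\<forall>k j. pp_comp d1 d2 k = Some j \<longrightarrow> w ! k = u ! j)"
      using ran1 by (auto simp: pp_comp_def map_comp_Some_iff dest: ranI)
    then show ?thesis by (simp only: prod_of_bool[OF finite_lessThan])
  qed
  also have "(\<Prod>m<r. if m \<in> ran d1 \<union> dom d2 then 1 else qint n q) = qint n q ^ pp_N r d1 d2"
    by (simp add: pp_N_eq_card[OF d1 d2] prod.If_cases Diff_eq del: Un_iff)
  also have "(\<Prod>m<r. if m \<in> dom d2 - ran d1 then q ^ (u ! the (d2 m)) else 1) * out_weight
      = (\<Prod>j\<in>{..<r} - ran (pp_comp d1 d2). q ^ (u ! j))"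
  proof -
    have "(\<Prod>m<r. if m \<in> dom d2 - ran d1 then q ^ (u ! the (d2 m)) else 1)
        = (\<Prod>m\<in>{..<r} \<inter> (dom d2 - ran d1). q ^ (u ! the (d2 m)))"
      by (rule prod.inter_restrict[symmetric]) simp
    also have "{..<r} \<inter> (dom d2 - ran d1) = dom d2 - ran d1" using dom2 by blast
    finally show ?thesis
      using prod_weights_pp_comp[OF d1 d2, of "\<lambda>j. q ^ (u ! j)"] by (simp add: out_weight_def)
  qed
  finally show ?thesis
    by (simp only: pp_matrix_def[of q r "pp_comp d1 d2" w u] mult_ac)
qed

lemma ran_pp_id: "ran (pp_id r) = {..<r}"
  by (auto simp: pp_id_def ran_def split: if_splits)

lemma ran_pp_s:
  assumes "Suc i < r"
  shows "ran (pp_s r i) = {..<r}"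
proof
  show "ran (pp_s r i) \<subseteq> {..<r}"
    using assms by (auto simp: pp_s_def ran_def split: if_splits)
  show "{..<r} \<subseteq> ran (pp_s r i)"
  proof
    fix m assume "m \<in> {..<r}"
    then have "pp_s r i (if m = i then Suc i else if m = Suc i then i else m) = Some m"
      using assms by (auto simp: pp_s_def)
    then show "m \<in> ran (pp_s r i)" by (rule ranI)
  qed
qed

lemma ran_pp_p: "ran (pp_p r j) = {..<r} - {j}"
  by (auto simp: pp_p_def ran_def split: if_splits)

lemma pp_matrix_pp_id:
  "w \<in> words n r \<Longrightarrow> u \<in> words n r \<Longrightarrow> pp_matrix q r (pp_id r) w u = tid w u"
  unfolding pp_matrix_def ran_pp_id
  by (auto simp: pp_id_def tid_def words_def list_eq_iff_nth_eq)

lemma pp_matrix_pp_s: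
  assumes i: "Suc i < r" and w: "w \<in> words n r" and u: "u \<in> words n r"
  shows "pp_matrix q r (pp_s r i) w u = swap_op i w u"
proof -
  have len: "length w = r" "length u = r" using w u by (auto simp: words_def)
  have "(\<forall>k m. pp_s r i k = Some m \<longrightarrow> w ! k = u ! m)
      \<longleftrightarrow> (\<forall>k<r. w ! k = u ! (if k = i then Suc i else if k = Suc i then i else k))"
    by (auto simp: pp_s_def)
  also have "\<dots> \<longleftrightarrow> w = u[i := u ! Suc i, Suc i := u ! i]"
  proof
    assume H: "\<forall>k<r. w ! k = u ! (if k = i then Suc i else if k = Suc i then i else k)"
    show "w = u[i := u ! Suc i, Suc i := u ! i]"
    proof (rule nth_equalityI)
      fix k assume "k < length w"
      then show "w ! k = u[i := u ! Suc i, Suc i := u ! i] ! k"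
        using H i len by (auto simp: nth_list_update)
    qed (simp add: len)
  qed (use i len in \<open>auto simp: nth_list_update\<close>)
  finally show ?thesis
    by (simp add: pp_matrix_def ran_pp_s[OF i] swap_op_def)
qed

lemma pp_matrix_pp_p:
  assumes j: "j < r" and w: "w \<in> words n r" and u: "u \<in> words n r"
  shows "pp_matrix q r (pp_p r j) w u = P_op q j w u"
proof -
  have "{..<r} - ran (pp_p r j) = {j}" using j by (auto simp: ran_pp_p)
  moreover have "length w = r" "length u = r" using w u by (auto simp: words_def)
  ultimately show ?thesis by (auto simp: pp_matrix_def P_op_def pp_p_def)
qed

theorem lemma9p1:
  fixes n r :: nat and q1 q2 :: complex
  assumes "n \<ge> 2" and "r \<ge> 1" and "q1 * q2 \<noteq> 0"
    and "\<forall>k::nat. k > 0 \<longrightarrow> (- q2 / q1) ^ k \<noteq> 1"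
  shows "\<exists>\<rho> :: (nat \<Rightarrow> nat option) \<Rightarrow> tmat.
           (\<forall>d1 d2. partial_perm r d1 \<longrightarrow> partial_perm r d2 \<longrightarrow>
              (\<forall>w\<in>words n r. \<forall>u\<in>words n r.
                 tmul n r (\<rho> d1) (\<rho> d2) w u
                 = tscale (qint n (- q2 / q1) ^ pp_N r d1 d2) (\<rho> (pp_comp d1 d2)) w u))
         \<and> (\<forall>w\<in>words n r. \<forall>u\<in>words n r. \<rho> (pp_id r) w u = tid w u)
         \<and> (\<forall>i. Suc i < r \<longrightarrow> (\<forall>w\<in>words n r. \<forall>u\<in>words n r. \<rho> (pp_s r i) w u = swap_op i w u))
         \<and> (\<forall>j. j < r \<longrightarrow> (\<forall>w\<in>words n r. \<forall>u\<in>words n r.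
                 \<rho> (pp_p r j) w u = P_op (- q2 / q1) j w u))"
  by (intro exI[of _ "pp_matrix (- q2 / q1) r"] conjI allI impI ballI)
    (simp_all add: tscale_def pp_matrix_mult pp_matrix_pp_id pp_matrix_pp_s pp_matrix_pp_p)

end
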